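(* Let $X \subseteq \mathbb{Z}^d$ be a finite lattice-convex set, let $H$ be a hiding set for $X$, and assume there exists $h \in H \setminus \mathrm{obs}(X)$. Then, for every $y \in \mathrm{obs}(X) \cap \mathrm{conv}(\{h\} \cup X)$, the set $(H \setminus \{h\}) \cup \{y\}$ is a hiding set for $X$. In particular, there is a maximum size hiding set for $X$ contained in $\mathrm{obs}(X)$.
   Context: A set $X \subseteq \mathbb{Z}^d$ is lattice-convex if $\mathrm{conv}(X) \cap \mathbb{Z}^d = X$. An observer of $X$ is a point $z \in \mathbb{Z}^d \setminus X$ such that $\mathrm{conv}(X \cup \{z\}) \cap \mathbb{Z}^d = X \cup \{z\}$; $\mathrm{obs}(X)$ is the set of observers. A set $H \subseteq (\mathrm{aff}(X) \cap \mathbb{Z}^d) \setminus X$ is a hiding set for $X$ if for all distinct $x,y \in H$ one has $\mathrm{conv}(\{x,y\}) \cap \mathrm{conv}(X) \ne \emptyset$. *)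

theory Defs
  imports "HOL-Analysis.Analysis"
begin

definition lattice :: "(real ^ 'd) set" where
  "lattice = {x. \<forall>i. x $ i \<in> \<int>}"

definition lattice_convex :: "(real ^ 'd) set \<Rightarrow> bool" where
  "lattice_convex X \<longleftrightarrow> X \<subseteq> lattice \<and> convex hull X \<inter> lattice = X"

definition obs :: "(real ^ 'd) set \<Rightarrow> (real ^ 'd) set" where
  "obs X = {z \<in> lattice - X. convex hull (insert z X) \<inter> lattice = insert z X}"

definition hiding_set :: "(real ^ 'd) set \<Rightarrow> (real ^ 'd) set \<Rightarrow> bool" where
  "hiding_set X H \<longleftrightarrow> H \<subseteq> (affine hull X \<inter> lattice) - X \<and>
     (\<forall>x\<in>H. \<forall>y\<in>H. x \<noteq> y \<longrightarrow> convex hull {x, y} \<inter> convex hull X \<noteq> {})"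

end

theory Submission
  imports Defs
begin

text \<open>
  Exchanging \<open>h\<close> for \<open>y \<in> conv (insert h X)\<close> preserves the hiding property by Pasch's
  axiom: if the segment \<open>[x, h]\<close> meets \<open>conv X\<close>, so does \<open>[x, y]\<close>. Every lattice point
  \<open>h \<notin> X\<close> has an observer in \<open>conv (insert h X)\<close>: a lattice point \<open>z \<notin> X\<close> there whose hull
  \<open>conv (insert z X)\<close> contains the fewest lattice points. This observer is not already in a
  hiding set containing \<open>h\<close>, since a segment from it to \<open>h\<close> through \<open>conv X\<close> would put it into
  \<open>conv X\<close>. Hiding sets have bounded size: if \<open>conv X\<close> lies in the ball of radius \<open>B\<close>, at most
  two of their points lie outside the ball of radius \<open>8 B\<close>, because two such far points whose
  segment passes through the small ball point in nearly opposite directions, and no three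
  directions are pairwise nearly opposite. So the non-observers of a maximum hiding set can be
  exchanged one at a time for observers.
\<close>

lemma finite_lattice_Int_bounded:
  assumes "bounded S"
  shows "finite (lattice \<inter> S)"
proof -
  obtain M where M: "\<And>x. x \<in> S \<Longrightarrow> norm x \<le> M"
    using assms by (auto simp: bounded_iff)
  have "lattice \<inter> S \<subseteq> vec_lambda ` (UNIV \<rightarrow>\<^sub>E {r \<in> \<int>. -M \<le> r \<and> r \<le> M})"
  proof
    fix x assume x: "x \<in> lattice \<inter> S"
    have "norm x \<le> M"
      using M x by blast
    then have "-M \<le> x $ i \<and> x $ i \<le> M" for i
      using component_le_norm_cart[of x i] by (auto simp: abs_le_iff)
    with x have "vec_nth x \<in> UNIV \<rightarrow>\<^sub>E {r \<in> \<int>. -M \<le> r \<and> r \<le> M}"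
      by (auto simp: lattice_def)
    then show "x \<in> vec_lambda ` (UNIV \<rightarrow>\<^sub>E {r \<in> \<int>. -M \<le> r \<and> r \<le> M})"
      by (rule rev_image_eqI) (simp add: vec_nth_inverse)
  qed
  then show ?thesis
    by (rule finite_subset) (simp add: finite_PiE finite_int_segment)
qed

lemma finite_convex_hull_Int_lattice:
  assumes "finite S"
  shows "finite (convex hull S \<inter> lattice)"
  using finite_lattice_Int_bounded[of "convex hull S"] assms
  by (simp add: Int_commute compact_imp_bounded finite_imp_compact_convex_hull)

lemma finite_card_le_2_if_no_three_distinct:
  assumes "\<And>x y z. x \<in> S \<Longrightarrow> y \<in> S \<Longrightarrow> z \<in> S \<Longrightarrow> x \<noteq> y \<Longrightarrow> y \<noteq> z \<Longrightarrow> x \<noteq> z \<Longrightarrow> False"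
  shows "finite S \<and> card S \<le> 2"
proof (rule ccontr)
  assume not_le_2: "\<not> (finite S \<and> card S \<le> 2)"
  obtain T where "T \<subseteq> S" "card T = 3"
  proof (cases "finite S")
    case True
    with not_le_2 have "3 \<le> card S"
      by simp
    then show ?thesis
      using that obtain_subset_with_card_n by metis
  next
    case False
    then show ?thesis
      using that infinite_arbitrarily_large by metis
  qed
  then show False
    using assms by (auto simp: card_3_iff)
qed

lemma convex_mem_of_scaled_combination:
  fixes K :: "'a::real_vector set"
  assumes "convex K" "x \<in> K" "y \<in> K" "0 \<le> u" "0 \<le> v" "0 < u + v"
    and "(u + v) *\<^sub>R z = u *\<^sub>R x + v *\<^sub>R y"
  shows "z \<in> K"
proof -
  have "z = (1 / (u + v)) *\<^sub>R ((u + v) *\<^sub>R z)"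
    using assms(6) by simp
  also have "\<dots> = (u / (u + v)) *\<^sub>R x + (v / (u + v)) *\<^sub>R y"
    unfolding assms(7) by (simp add: scaleR_add_right)
  finally have "z = (u / (u + v)) *\<^sub>R x + (v / (u + v)) *\<^sub>R y" .
  moreover have "u / (u + v) + v / (u + v) = 1"
    using assms(6) by (simp add: add_divide_distrib[symmetric])
  ultimately show ?thesis
    using assms(1-6) by (simp add: convexD)
qed

lemma in_convex_hull_insertE:
  fixes K :: "'a::real_vector set"
  assumes "convex K" "K \<noteq> {}" "y \<in> convex hull (insert h K)"
  obtains u c where "0 \<le> u" "u \<le> 1" "c \<in> K" "y = u *\<^sub>R h + (1 - u) *\<^sub>R c"
proof -
  obtain c where c: "c \<in> K" "y \<in> closed_segment h c"
    using assms by (auto simp: convex_hull_insert_segments hull_same)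
  then obtain t where "0 \<le> t" "t \<le> 1" "y = (1 - t) *\<^sub>R h + t *\<^sub>R c"
    by (auto simp: closed_segment_def)
  then show ?thesis
    using that[of "1 - t" c] c(1) by (simp add: add.commute)
qed

lemma closed_segment_meets_convex_to_hull_insert:
  fixes K :: "'a::real_vector set"
  assumes K: "convex K" and p: "p \<in> closed_segment x h" "p \<in> K"
    and y: "y \<in> convex hull (insert h K)"
  shows "closed_segment x y \<inter> K \<noteq> {}"
proof -
  obtain u c where u: "0 \<le> u" "u \<le> 1" and c: "c \<in> K" and y_eq: "y = u *\<^sub>R h + (1 - u) *\<^sub>R c"
    using in_convex_hull_insertE[OF K _ y] p(2) by blast
  obtain s where s: "0 \<le> s" "s \<le> 1" and p_eq: "p = (1 - s) *\<^sub>R x + s *\<^sub>R h"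
    using p(1) by (auto simp: closed_segment_def)
  show ?thesis
  proof (cases "u = 0")
    case True
    then show ?thesis using c y_eq by auto
  next
    case False
    \<comment> \<open>Pasch: \<open>q\<close> is the point where \<open>[x, y]\<close> crosses \<open>[p, c]\<close>.\<close>
    define D where "D = u * (1 - s) + s"
    define q where "q = (1 / D) *\<^sub>R ((u * (1 - s)) *\<^sub>R x + s *\<^sub>R y)"
    have "0 \<le> u * (1 - s)"
      using u s by simp
    then have D: "0 < D"
      using False u(1) s(1) unfolding D_def by (cases "s = 0") auto
    have q_eq: "D *\<^sub>R q = (u * (1 - s)) *\<^sub>R x + s *\<^sub>R y"
      using D by (simp add: q_def)
    have "(u + s * (1 - u)) *\<^sub>R q = D *\<^sub>R q"
      by (simp add: D_def algebra_simps)
    also have "\<dots> = u *\<^sub>R p + (s * (1 - u)) *\<^sub>R c"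
      unfolding q_eq by (simp add: p_eq y_eq algebra_simps)
    finally have "(u + s * (1 - u)) *\<^sub>R q = u *\<^sub>R p + (s * (1 - u)) *\<^sub>R c" .
    moreover have "0 < u + s * (1 - u)"
      using D by (simp add: D_def algebra_simps)
    ultimately have "q \<in> K"
      using u s by (intro convex_mem_of_scaled_combination[OF K p(2) c, of u "s * (1 - u)"]) auto
    moreover have "q \<in> closed_segment x y"
      using q_eq D s \<open>0 \<le> u * (1 - s)\<close> unfolding D_def
      by (intro convex_mem_of_scaled_combination[OF convex_closed_segment ends_in_segment,
            of "u * (1 - s)" s]) auto
    ultimately show ?thesis by blast
  qed
qed

lemma mem_convex_if_segment_to_apex_meets:
  fixes K :: "'a::real_vector set"
  assumes K: "convex K" and y: "y \<in> convex hull (insert h K)"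
    and q: "q \<in> closed_segment y h" "q \<in> K"
  shows "y \<in> K"
proof -
  obtain u c where u: "0 \<le> u" "u \<le> 1" and c: "c \<in> K" and y_eq: "y = u *\<^sub>R h + (1 - u) *\<^sub>R c"
    using in_convex_hull_insertE[OF K _ y] q(2) by blast
  obtain t where t: "0 \<le> t" "t \<le> 1" and q_eq: "q = (1 - t) *\<^sub>R y + t *\<^sub>R h"
    using q(1) by (auto simp: closed_segment_def)
  show ?thesis
  proof (cases "u = 0")
    case True
    then show ?thesis using c y_eq by simp
  next
    case False
    have "(u + t * (1 - u)) *\<^sub>R y = u *\<^sub>R q + (t * (1 - u)) *\<^sub>R c"
      unfolding q_eq y_eq by (simp add: algebra_simps)
    moreover have "0 \<le> t * (1 - u)"
      using t u by simp
    ultimately show ?thesis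
      using False u by (intro convex_mem_of_scaled_combination[OF K q(2) c, of u "t * (1 - u)"]) auto
  qed
qed

lemma convex_hull_insert_antisym:
  fixes K :: "'a::real_vector set"
  assumes K: "convex K" and w: "w \<in> convex hull (insert z K)" and z: "z \<in> convex hull (insert w K)"
    and "w \<notin> K"
  shows "w = z"
proof (cases "K = {}")
  case True
  then show ?thesis using w by simp
next
  case False
  obtain a c where a: "0 \<le> a" "a \<le> 1" and c: "c \<in> K" and w_eq: "w = a *\<^sub>R z + (1 - a) *\<^sub>R c"
    using in_convex_hull_insertE[OF K False w] by blast
  obtain b c' where b: "0 \<le> b" "b \<le> 1" and c': "c' \<in> K" and z_eq: "z = b *\<^sub>R w + (1 - b) *\<^sub>R c'"
    using in_convex_hull_insertE[OF K False z] by blast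
  show ?thesis
  proof (rule ccontr)
    assume "w \<noteq> z"
    then have "a \<noteq> 1"
      using w_eq by auto
    with a have "a < 1"
      by simp
    have "w = a *\<^sub>R z + (1 - a) *\<^sub>R c"
      by (rule w_eq)
    also have "\<dots> = (a * b) *\<^sub>R w + ((a * (1 - b)) *\<^sub>R c' + (1 - a) *\<^sub>R c)"
      unfolding z_eq by (simp add: algebra_simps)
    finally have w_fix: "w = (a * b) *\<^sub>R w + ((a * (1 - b)) *\<^sub>R c' + (1 - a) *\<^sub>R c)" .
    have "(a * (1 - b) + (1 - a)) *\<^sub>R w = w - (a * b) *\<^sub>R w"
      by (simp add: algebra_simps)
    also have "\<dots> = (a * (1 - b)) *\<^sub>R c' + (1 - a) *\<^sub>R c"
      by (subst (1) w_fix) simp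
    finally have "(a * (1 - b) + (1 - a)) *\<^sub>R w = (a * (1 - b)) *\<^sub>R c' + (1 - a) *\<^sub>R c" .
    moreover have "0 \<le> a * (1 - b)"
      using a b by simp
    ultimately have "w \<in> K"
      using \<open>a < 1\<close> by (intro convex_mem_of_scaled_combination[OF K c' c]) auto
    then show False
      using \<open>w \<notin> K\<close> by blast
  qed
qed

lemma norm_sgn_add_le_if_segment_near_origin:
  fixes x y p :: "'a::real_normed_vector"
  assumes B: "0 < B" and x: "8 * B \<le> norm x" and y: "8 * B \<le> norm y"
    and p: "p \<in> closed_segment x y" "norm p \<le> B"
  shows "norm (sgn x + sgn y) \<le> 4 / 7"
proof -
  obtain t where t: "0 \<le> t" "t \<le> 1" and p_eq: "p = (1 - t) *\<^sub>R x + t *\<^sub>R y"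
    using p(1) by (auto simp: closed_segment_def)
  define a where "a = (1 - t) * norm x"
  define b where "b = t * norm y"
  have "x \<noteq> 0" "y \<noteq> 0"
    using B x y by auto
  then have "a *\<^sub>R sgn x = (1 - t) *\<^sub>R x" "b *\<^sub>R sgn y = t *\<^sub>R y"
    by (simp_all add: a_def b_def sgn_div_norm)
  then have p_ab: "p = a *\<^sub>R sgn x + b *\<^sub>R sgn y"
    by (simp add: p_eq)
  have ab: "0 \<le> a" "0 \<le> b"
    using t by (simp_all add: a_def b_def)
  have "\<bar>norm (a *\<^sub>R sgn x) - norm (- (b *\<^sub>R sgn y))\<bar> \<le> norm (a *\<^sub>R sgn x - - (b *\<^sub>R sgn y))"
    by (rule norm_triangle_ineq3)
  then have ab_diff: "\<bar>a - b\<bar> \<le> B"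
    using ab p(2) \<open>x \<noteq> 0\<close> \<open>y \<noteq> 0\<close> by (simp add: p_ab norm_sgn)
  have "(1 - t) * (8 * B) + t * (8 * B) \<le> a + b"
    unfolding a_def b_def using t x y by (intro add_mono mult_left_mono) auto
  with ab_diff have a_large: "7 / 2 * B \<le> a"
    by (simp add: algebra_simps)
  have "a *\<^sub>R (sgn x + sgn y) = p + (a - b) *\<^sub>R sgn y"
    by (simp add: p_ab algebra_simps)
  then have "a * norm (sgn x + sgn y) = norm (p + (a - b) *\<^sub>R sgn y)"
    using ab by (metis abs_of_nonneg norm_scaleR)
  also have "\<dots> \<le> norm p + \<bar>a - b\<bar>"
    using norm_triangle_ineq[of p "(a - b) *\<^sub>R sgn y"] \<open>y \<noteq> 0\<close> by (simp add: norm_sgn)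
  also have "\<dots> \<le> 2 * B"
    using p(2) ab_diff by simp
  finally have "a * norm (sgn x + sgn y) \<le> 2 * B" .
  moreover have "7 / 2 * B * norm (sgn x + sgn y) \<le> a * norm (sgn x + sgn y)"
    using mult_right_mono[OF a_large norm_ge_zero] .
  ultimately have "B * (7 * norm (sgn x + sgn y)) \<le> B * 4"
    by linarith
  then show ?thesis
    using B by (simp add: mult_le_cancel_left_pos)
qed

lemma no_three_far_points_with_segments_meeting_ball:
  fixes x y z :: "'a::real_normed_vector"
  assumes B: "0 < B" and far: "8 * B \<le> norm x" "8 * B \<le> norm y" "8 * B \<le> norm z"
    and meet: "closed_segment x y \<inter> cball 0 B \<noteq> {}" "closed_segment x z \<inter> cball 0 B \<noteq> {}"
      "closed_segment y z \<inter> cball 0 B \<noteq> {}"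
  shows False
proof -
  have opposite: "norm (sgn u + sgn v) \<le> 4 / 7"
    if uv: "8 * B \<le> norm u" "8 * B \<le> norm v" "closed_segment u v \<inter> cball 0 B \<noteq> {}" for u v :: 'a
  proof -
    obtain p where "p \<in> closed_segment u v" "norm p \<le> B"
      using uv(3) by auto
    then show ?thesis
      using norm_sgn_add_le_if_segment_near_origin[OF B uv(1,2)] by blast
  qed
  have "norm (2 *\<^sub>R sgn x) = norm ((sgn x + sgn y) + (sgn x + sgn z) - (sgn y + sgn z))"
    by (simp add: algebra_simps scaleR_2)
  also have "\<dots> \<le> norm (sgn x + sgn y) + norm (sgn x + sgn z) + norm (sgn y + sgn z)"
    by norm
  also have "\<dots> \<le> 12 / 7"
    using opposite[OF far(1,2) meet(1)] opposite[OF far(1,3) meet(2)] opposite[OF far(2,3) meet(3)]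
    by linarith
  finally have "norm (2 *\<^sub>R sgn x) \<le> 12 / 7" .
  moreover have "x \<noteq> 0"
    using B far(1) by auto
  ultimately show False
    by (simp add: norm_sgn)
qed

lemma hiding_set_card_bounded:
  fixes X :: "(real ^ 'd) set"
  assumes "finite X"
  obtains N where "\<And>H. hiding_set X H \<Longrightarrow> finite H \<and> card H \<le> N"
proof -
  obtain B where B: "0 < B" "convex hull X \<subseteq> ball 0 B"
    using bounded_subset_ballD[OF compact_imp_bounded[OF finite_imp_compact_convex_hull[OF assms]]]
    by blast
  define F :: "(real ^ 'd) set" where "F = lattice \<inter> cball 0 (8 * B)"
  have "finite F"
    unfolding F_def by (simp add: finite_lattice_Int_bounded)
  have "finite H \<and> card H \<le> card F + 2" if H: "hiding_set X H" for H
  proof -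
    have far: "8 * B \<le> norm x" if "x \<in> H - F" for x
      using that H by (auto simp: F_def hiding_set_def)
    have "closed_segment x y \<inter> cball 0 B \<noteq> {}" if "x \<in> H" "y \<in> H" "x \<noteq> y" for x y
      using that H B(2) ball_subset_cball by (fastforce simp: hiding_set_def segment_convex_hull)
    then have G: "finite (H - F) \<and> card (H - F) \<le> 2"
      using no_three_far_points_with_segments_meeting_ball[OF B(1) far far far]
      by (intro finite_card_le_2_if_no_three_distinct) (metis DiffD1)
    have "H = F \<inter> H \<union> (H - F)"
      by blast
    moreover have "finite (F \<inter> H)" "card (F \<inter> H) \<le> card F"
      using \<open>finite F\<close> by (simp_all add: card_mono)
    ultimately show ?thesis
      using G card_Un_le[of "F \<inter> H" "H - F"] by (metis add_mono finite_UnI order_trans)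
  qed
  then show ?thesis
    using that by blast
qed

lemma ex_obs_in_convex_hull_insert:
  assumes X: "finite X" "lattice_convex X" and h: "h \<in> lattice - X"
  shows "\<exists>y \<in> obs X. y \<in> convex hull (insert h X)"
proof -
  let ?P = "\<lambda>z. z \<in> lattice - X \<and> z \<in> convex hull (insert h X)"
  let ?count = "\<lambda>z. card (convex hull (insert z X) \<inter> lattice)"
  have "?P h"
    using h by (simp add: hull_inc)
  then obtain z where z: "?P z" and z_min: "\<And>w. ?P w \<Longrightarrow> ?count z \<le> ?count w"
    using ex_has_least_nat[of ?P h ?count] by blast
  have X_lattice: "X \<subseteq> lattice" and X_closed: "convex hull X \<inter> lattice = X"
    using X(2) by (auto simp: lattice_convex_def)
  have hull_insert_mono: "convex hull (insert a X) \<subseteq> convex hull (insert b X)"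
    if "a \<in> convex hull (insert b X)" for a b
    using that by (intro hull_minimal) (auto intro: hull_inc)
  have "convex hull (insert z X) \<inter> lattice = insert z X"
  proof (rule ccontr)
    assume "convex hull (insert z X) \<inter> lattice \<noteq> insert z X"
    moreover have "insert z X \<subseteq> convex hull (insert z X) \<inter> lattice"
      using z X_lattice by (auto intro: hull_inc)
    ultimately obtain w where w: "w \<in> convex hull (insert z X)" "w \<in> lattice" "w \<notin> insert z X"
      by blast
    have "w \<notin> convex hull X"
      using w X_closed by blast
    then have "z \<notin> convex hull (insert w X)"
      using convex_hull_insert_antisym[OF convex_convex_hull, of w z X] w(1,3)
      by (auto simp flip: hull_insert)
    moreover have "z \<in> convex hull (insert z X) \<inter> lattice"
      using z by (simp add: hull_inc)
    ultimately have "convex hull (insert w X) \<inter> lattice \<subset> convex hull (insert z X) \<inter> lattice"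
      using hull_insert_mono[OF w(1)] by blast
    then have "?count w < ?count z"
      using X(1) by (simp add: finite_convex_hull_Int_lattice psubset_card_mono)
    moreover have "?P w"
      using w hull_insert_mono[of z h] z by auto
    ultimately show False
      using z_min by fastforce
  qed
  then show ?thesis
    using z by (auto simp: obs_def)
qed

lemma hiding_set_exchange:
  assumes H: "hiding_set X H" and h: "h \<in> H"
    and y: "y \<in> lattice - X" "y \<in> convex hull (insert h X)"
  shows "hiding_set X ((H - {h}) \<union> {y})"
proof -
  have H_sub: "H \<subseteq> affine hull X \<inter> lattice - X"
    using H by (simp add: hiding_set_def)
  then have "h \<in> affine hull X"
    using h by blast
  then have "convex hull (insert h X) \<subseteq> affine hull X"
    by (intro hull_minimal) (auto intro: hull_inc affine_imp_convex)
  with H_sub y have sub: "(H - {h}) \<union> {y} \<subseteq> affine hull X \<inter> lattice - X"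
    by auto
  have meets_y: "closed_segment x y \<inter> convex hull X \<noteq> {}" if x: "x \<in> H" "x \<noteq> h" for x
  proof -
    have "closed_segment x h \<inter> convex hull X \<noteq> {}"
      using H x h by (simp add: hiding_set_def segment_convex_hull)
    then obtain p where "p \<in> closed_segment x h" "p \<in> convex hull X"
      by blast
    then show ?thesis
      using closed_segment_meets_convex_to_hull_insert[OF convex_convex_hull] y(2)
      by (simp flip: hull_insert)
  qed
  have "closed_segment a b \<inter> convex hull X \<noteq> {}"
    if ab: "a \<in> (H - {h}) \<union> {y}" "b \<in> (H - {h}) \<union> {y}" "a \<noteq> b" for a b
  proof -
    consider "a \<in> H" "b \<in> H" | "a = y" "b \<in> H" "b \<noteq> h" | "b = y" "a \<in> H" "a \<noteq> h"
      using ab by auto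
    then show ?thesis
    proof cases
      case 1
      then show ?thesis
        using H ab(3) by (auto simp: hiding_set_def segment_convex_hull)
    next
      case 2
      then show ?thesis
        using meets_y[of b] by (simp add: closed_segment_commute)
    next
      case 3
      then show ?thesis
        using meets_y[of a] by simp
    qed
  qed
  with sub show ?thesis
    unfolding hiding_set_def segment_convex_hull[symmetric] by blast
qed

lemma hiding_set_not_mem_hull_insert:
  assumes X: "lattice_convex X" and H: "hiding_set X H" "h \<in> H"
    and y: "y \<in> lattice - X" "y \<noteq> h" "y \<in> convex hull (insert h X)"
  shows "y \<notin> H"
proof
  assume "y \<in> H"
  then have "closed_segment y h \<inter> convex hull X \<noteq> {}"
    using H y(2) by (auto simp: hiding_set_def segment_convex_hull)
  then have "y \<in> convex hull X"
    using mem_convex_if_segment_to_apex_meets[OF convex_convex_hull] y(3)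
    by (auto simp flip: hull_insert)
  then show False
    using y(1) X by (auto simp: lattice_convex_def)
qed

lemma hiding_set_exchange_into_obs:
  assumes X: "finite X" "lattice_convex X" and H: "hiding_set X H" "finite H"
  shows "\<exists>H'. hiding_set X H' \<and> H' \<subseteq> obs X \<and> card H' = card H"
  using H
proof (induction "card (H - obs X)" arbitrary: H)
  case 0
  then show ?case
    by auto
next
  case (Suc n)
  then have "H - obs X \<noteq> {}"
    by (intro notI) simp
  then obtain h where h: "h \<in> H" "h \<notin> obs X"
    by blast
  have "h \<in> lattice - X"
    using Suc.prems h by (auto simp: hiding_set_def)
  then obtain y where y: "y \<in> obs X" "y \<in> convex hull (insert h X)"
    using ex_obs_in_convex_hull_insert[OF X] by blast
  have y_lattice: "y \<in> lattice - X"
    using y(1) by (auto simp: obs_def)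
  have "y \<notin> H"
    using hiding_set_not_mem_hull_insert[OF X(2) Suc.prems(1) h(1) y_lattice _ y(2)] h(2) y(1)
    by blast
  let ?H' = "(H - {h}) \<union> {y}"
  have "hiding_set X ?H'"
    using hiding_set_exchange[OF Suc.prems(1) h(1) y_lattice y(2)] .
  moreover have "finite ?H'"
    using Suc.prems(2) by simp
  moreover have "card ?H' = card H"
    using Suc.prems(2) \<open>y \<notin> H\<close> card_Suc_Diff1[OF Suc.prems(2) h(1)] by simp
  moreover have "?H' - obs X = (H - obs X) - {h}"
    using h y(1) by auto
  then have "n = card (?H' - obs X)"
    using Suc.hyps(2) Suc.prems(2) h by (simp add: card_Diff_singleton)
  ultimately show ?case
    using Suc.hyps(1)[of ?H'] by auto
qed

lemma ex_max_card_hiding_set_subset_obs: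
  fixes X :: "(real ^ 'd) set"
  assumes "finite X" "lattice_convex X"
  shows "\<exists>H'. hiding_set X H' \<and> H' \<subseteq> obs X \<and> finite H' \<and>
           (\<forall>H. hiding_set X H \<longrightarrow> finite H \<and> card H \<le> card H')"
proof -
  obtain N where N: "\<And>H. hiding_set X H \<Longrightarrow> finite H \<and> card H \<le> N"
    using hiding_set_card_bounded[OF assms(1)] by blast
  then have "\<forall>H. hiding_set X H \<longrightarrow> card H < Suc N"
    by (simp add: le_imp_less_Suc)
  moreover have "hiding_set X {}"
    by (simp add: hiding_set_def)
  ultimately obtain H0 where H0: "hiding_set X H0" "\<forall>H. hiding_set X H \<longrightarrow> card H \<le> card H0"
    using ex_has_greatest_nat[of "hiding_set X" "{}" card "Suc N"] by blast
  then obtain H' where H': "hiding_set X H'" "H' \<subseteq> obs X" "card H' = card H0"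
    using hiding_set_exchange_into_obs[OF assms] N by blast
  then show ?thesis
    using H0(2) N by (intro exI[of _ H']) auto
qed

theorem lemma2p6:
  fixes X :: "(real ^ 'd) set"
  assumes "finite X" and "lattice_convex X"
  shows "(\<forall>H h y. hiding_set X H \<and> h \<in> H - obs X \<and> y \<in> obs X \<inter> convex hull (insert h X)
            \<longrightarrow> hiding_set X ((H - {h}) \<union> {y}))
       \<and> (\<exists>H'. hiding_set X H' \<and> H' \<subseteq> obs X \<and> finite H' \<and>
            (\<forall>H. hiding_set X H \<longrightarrow> finite H \<and> card H \<le> card H'))"
proof (intro conjI allI impI)
  fix H h y
  assume "hiding_set X H \<and> h \<in> H - obs X \<and> y \<in> obs X \<inter> convex hull (insert h X)"
  then show "hiding_set X ((H - {h}) \<union> {y})"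
    by (intro hiding_set_exchange) (auto simp: obs_def)
qed (rule ex_max_card_hiding_set_subset_obs[OF assms])

end
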